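(* Let $\mathbb{V}$ be a finite set of nodes and $Z\notin\mathbb{V}$ an additional node, and let $\omega$ be a symmetric weight function on pairs of distinct nodes of $\mathbb{V}\cup\{Z\}$. Let $\sigma^*$ be an optimal TSP route (minimum-cost Hamiltonian cycle) over $\mathbb{V}$, and let $P,Q$ be two nodes that are neighbours on $\sigma^*$. Suppose there is no unordered pair $\{A,B\}$ of distinct nodes of $\mathbb{V}$ with $\{A,B\}\neq\{P,Q\}$ such that $$\omega(A,Z)+\omega(B,Z)-\omega(A,B)\le \omega(P,Z)+\omega(Q,Z)-\omega(P,Q).$$ Then the route obtained from $\sigma^*$ by inserting $Z$ between $P$ and $Q$ is an optimal TSP route over $\mathbb{V}\cup\{Z\}$.
   Context: For a set of nodes with weights $\omega$, a route is a cyclic ordering (permutation) $\sigma=(\sigma_1,\dots,\sigma_n)$ of all nodes, with cost $c(\sigma)=\omega(\sigma_n,\sigma_1)+\sum_{i=1}^{n-1}\omega(\sigma_i,\sigma_{i+1})$; a route is optimal if it minimizes this cost among all permutations. Two nodes are neighbours on $\sigma$ if they are consecutive in $\sigma$ or are its first and last element. *)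

theory Defs
  imports Main "HOL.Real"
begin

text \<open>A route over a node set S is a list enumerating S without repetition
(a cyclic ordering). Its cost includes the closing edge from the last to the first node.\<close>

definition is_route :: "'a set \<Rightarrow> 'a list \<Rightarrow> bool" where
  "is_route S \<sigma> \<longleftrightarrow> distinct \<sigma> \<and> set \<sigma> = S"

definition route_cost :: "('a \<Rightarrow> 'a \<Rightarrow> real) \<Rightarrow> 'a list \<Rightarrow> real" where
  "route_cost \<omega> \<sigma> = (\<Sum>i<length \<sigma>. \<omega> (\<sigma> ! i) (\<sigma> ! (Suc i mod length \<sigma>)))"

definition optimal_route :: "('a \<Rightarrow> 'a \<Rightarrow> real) \<Rightarrow> 'a set \<Rightarrow> 'a list \<Rightarrow> bool" where
  "optimal_route \<omega> S \<sigma> \<longleftrightarrow> is_route S \<sigma> \<and> (\<forall>\<tau>. is_route S \<tau> \<longrightarrow> route_cost \<omega> \<sigma> \<le> route_cost \<omega> \<tau>)"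

definition neighbours :: "'a list \<Rightarrow> 'a \<Rightarrow> 'a \<Rightarrow> bool" where
  "neighbours \<sigma> P Q \<longleftrightarrow> (\<exists>i<length \<sigma>.
      (\<sigma> ! i = P \<and> \<sigma> ! (Suc i mod length \<sigma>) = Q) \<or>
      (\<sigma> ! i = Q \<and> \<sigma> ! (Suc i mod length \<sigma>) = P))"

definition insert_after :: "'a list \<Rightarrow> nat \<Rightarrow> 'a \<Rightarrow> 'a list" where
  "insert_after \<sigma> i Z = take (Suc i) \<sigma> @ [Z] @ drop (Suc i) \<sigma>"

end

theory Submission
  imports Defs
begin

text \<open>Deleting \<open>Z\<close> from a route over \<open>V \<union> {Z}\<close> leaves a route over \<open>V\<close> whose cost is
  smaller by exactly the insertion cost \<open>\<omega>(A,Z) + \<omega>(Z,B) - \<omega>(A,B)\<close>, where \<open>A\<close> and \<open>B\<close> are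
  the neighbours of \<open>Z\<close>. Hence every route over \<open>V \<union> {Z}\<close> costs at least the optimal cost over
  \<open>V\<close> plus the least insertion cost of a pair of distinct nodes of \<open>V\<close>. Inserting \<open>Z\<close> between \<open>P\<close>
  and \<open>Q\<close> in \<open>\<sigma>*\<close> attains this bound, since \<open>\<sigma>*\<close> is optimal and, by the symmetry of \<open>\<omega>\<close>,
  \<open>{P, Q}\<close> is the pair of least insertion cost.\<close>

fun path_cost :: "('a \<Rightarrow> 'a \<Rightarrow> real) \<Rightarrow> 'a list \<Rightarrow> real" where
  "path_cost w [] = 0"
| "path_cost w [x] = 0"
| "path_cost w (x # y # zs) = w x y + path_cost w (y # zs)"

lemma path_cost_conv_sum: "path_cost w xs = (\<Sum>i<length xs - 1. w (xs ! i) (xs ! Suc i))"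
proof (induction w xs rule: path_cost.induct)
  case (3 w x y zs)
  have "(\<Sum>i<length (x # y # zs) - 1. w ((x # y # zs) ! i) ((x # y # zs) ! Suc i))
      = (\<Sum>i<Suc (length zs). w ((x # y # zs) ! i) ((x # y # zs) ! Suc i))"
    by simp
  also have "\<dots> = w x y + (\<Sum>i<length zs. w ((y # zs) ! i) ((y # zs) ! Suc i))"
    by (subst sum.lessThan_Suc_shift) simp
  finally show ?case using 3 by simp
qed auto

lemma path_cost_append:
  "xs \<noteq> [] \<Longrightarrow> ys \<noteq> [] \<Longrightarrow>
    path_cost w (xs @ ys) = path_cost w xs + w (last xs) (hd ys) + path_cost w ys"
proof (induction xs)
  case (Cons x xs)
  then show ?case by (cases xs; cases ys) auto
qed simp

lemma route_cost_conv_path_cost: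
  assumes "xs \<noteq> []"
  shows "route_cost w xs = path_cost w xs + w (last xs) (hd xs)"
proof -
  obtain n where n: "length xs = Suc n" using assms by (cases xs) auto
  have "route_cost w xs = (\<Sum>i<n. w (xs ! i) (xs ! (Suc i mod Suc n))) + w (xs ! n) (xs ! 0)"
    unfolding route_cost_def n by simp
  also have "(\<Sum>i<n. w (xs ! i) (xs ! (Suc i mod Suc n))) = path_cost w xs"
    using n by (simp add: path_cost_conv_sum)
  also have "xs ! n = last xs" using n assms by (simp add: last_conv_nth)
  also have "xs ! 0 = hd xs" using assms by (simp add: hd_conv_nth)
  finally show ?thesis .
qed

lemma route_cost_rotate1: "route_cost w (rotate1 xs) = route_cost w xs"
proof (cases xs)
  case (Cons x ys)
  show ?thesis
  proof (cases "ys = []")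
    case False
    have "route_cost w (rotate1 xs) = path_cost w (ys @ [x]) + w x (hd ys)"
      using Cons False by (simp add: route_cost_conv_path_cost)
    also have "\<dots> = path_cost w ys + w (last ys) x + w x (hd ys)"
      using False by (simp add: path_cost_append)
    also have "\<dots> = route_cost w xs"
      using Cons False by (cases ys) (simp_all add: route_cost_conv_path_cost)
    finally show ?thesis .
  qed (simp add: Cons)
qed simp

lemma route_cost_rotate: "route_cost w (rotate n xs) = route_cost w xs"
  by (induction n) (simp_all add: route_cost_rotate1)

definition insertion_cost :: "('a \<Rightarrow> 'a \<Rightarrow> real) \<Rightarrow> 'a \<Rightarrow> 'a \<Rightarrow> 'a \<Rightarrow> real" where
  "insertion_cost w Z A B = w A Z + w Z B - w A B"

lemma route_cost_Cons:
  assumes "xs \<noteq> []"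
  shows "route_cost w (Z # xs) = route_cost w xs + insertion_cost w Z (last xs) (hd xs)"
  using assms by (cases xs) (simp_all add: route_cost_conv_path_cost insertion_cost_def)

lemma rotate_Suc_insert_after:
  assumes "i < length xs"
  shows "rotate (Suc i) (insert_after xs i Z) = Z # rotate (Suc i) xs"
proof -
  have "rotate (Suc i) (insert_after xs i Z) = rotate (Suc i) (take (Suc i) xs @ Z # drop (Suc i) xs)"
    unfolding insert_after_def by simp
  also have "\<dots> = Z # drop (Suc i) xs @ take (Suc i) xs"
    using assms rotate_append[of "take (Suc i) xs"] by simp
  also have "drop (Suc i) xs @ take (Suc i) xs = rotate (Suc i) xs"
    using assms rotate_append[of "take (Suc i) xs" "drop (Suc i) xs"] by simp
  finally show ?thesis .
qed

lemma last_rotate_Suc: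
  assumes "i < length xs"
  shows "last (rotate (Suc i) xs) = xs ! i"
proof -
  have "last (rotate (Suc i) xs) = rotate (Suc i) xs ! (length xs - 1)"
    using assms by (subst last_conv_nth) (auto simp del: rotate_Suc)
  also have "\<dots> = xs ! ((Suc i + (length xs - 1)) mod length xs)"
    using assms by (simp add: nth_rotate del: rotate_Suc)
  also have "Suc i + (length xs - 1) = i + length xs"
    using assms by simp
  finally show ?thesis
    using assms by simp
qed

lemma route_cost_insert_after:
  assumes "i < length xs"
  shows "route_cost w (insert_after xs i Z)
    = route_cost w xs + insertion_cost w Z (xs ! i) (xs ! (Suc i mod length xs))"
proof -
  have "xs \<noteq> []" using assms by auto
  have "route_cost w (insert_after xs i Z) = route_cost w (Z # rotate (Suc i) xs)"
    by (metis route_cost_rotate rotate_Suc_insert_after[OF assms])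
  also have "\<dots> = route_cost w xs
      + insertion_cost w Z (last (rotate (Suc i) xs)) (hd (rotate (Suc i) xs))"
    using \<open>xs \<noteq> []\<close> by (simp del: rotate_Suc add: route_cost_Cons route_cost_rotate)
  also have "\<dots> = route_cost w xs + insertion_cost w Z (xs ! i) (xs ! (Suc i mod length xs))"
    using \<open>xs \<noteq> []\<close> by (simp del: rotate_Suc add: last_rotate_Suc[OF assms] hd_rotate_conv_nth)
  finally show ?thesis .
qed

lemma is_route_insert_after:
  assumes "is_route S xs" "Z \<notin> S" "i < length xs"
  shows "is_route (insert Z S) (insert_after xs i Z)"
proof -
  have "is_route (insert Z S) (Z # rotate (Suc i) xs)"
    using assms unfolding is_route_def by (simp del: rotate_Suc)
  then show ?thesis
    unfolding is_route_def by (metis distinct_rotate set_rotate rotate_Suc_insert_after[OF assms(3)])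
qed

lemma is_route_insertE:
  assumes "is_route (insert Z S) ys" "Z \<notin> S"
  obtains xs where "is_route S xs" "route_cost w ys = route_cost w (Z # xs)"
proof -
  obtain k where k: "k < length ys" "ys ! k = Z"
    using assms(1) unfolding is_route_def by (metis insertI1 in_set_conv_nth)
  moreover have "ys \<noteq> []"
    using k by auto
  ultimately have "rotate k ys \<noteq> []" "hd (rotate k ys) = Z"
    using hd_rotate_conv_nth[of ys k] by auto
  then obtain xs where xs: "rotate k ys = Z # xs"
    by (cases "rotate k ys") auto
  have "is_route (insert Z S) (Z # xs)"
    using assms(1) unfolding is_route_def by (metis distinct_rotate set_rotate xs)
  then have "is_route S xs"
    using assms(2) unfolding is_route_def by auto
  moreover have "route_cost w ys = route_cost w (Z # xs)"
    by (metis route_cost_rotate xs)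
  ultimately show thesis by (rule that)
qed

lemma distinct_last_neq_hd: "distinct xs \<Longrightarrow> 2 \<le> length xs \<Longrightarrow> last xs \<noteq> hd xs"
  by (cases xs) auto

lemma optimal_route_insert_after:
  assumes opt: "optimal_route w S xs" and Z: "Z \<notin> S" and i: "i < length xs"
    and edge: "xs ! i \<noteq> xs ! (Suc i mod length xs)"
    and least: "\<forall>A\<in>S. \<forall>B\<in>S. A \<noteq> B \<longrightarrow>
      insertion_cost w Z (xs ! i) (xs ! (Suc i mod length xs)) \<le> insertion_cost w Z A B"
  shows "optimal_route w (insert Z S) (insert_after xs i Z)"
  unfolding optimal_route_def
proof (intro conjI allI impI)
  have route: "is_route S xs" and min: "\<And>ys. is_route S ys \<Longrightarrow> route_cost w xs \<le> route_cost w ys"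
    using opt unfolding optimal_route_def by auto
  show "is_route (insert Z S) (insert_after xs i Z)"
    using route Z i by (rule is_route_insert_after)
  have "length xs \<noteq> 1" using i edge by auto
  then have len: "2 \<le> length xs" using i by linarith
  fix ys assume "is_route (insert Z S) ys"
  then obtain zs where zs: "is_route S zs" and cost: "route_cost w ys = route_cost w (Z # zs)"
    using Z by (rule is_route_insertE)
  have "length zs = length xs"
    using zs route unfolding is_route_def by (metis distinct_card)
  then have "zs \<noteq> []" "last zs \<noteq> hd zs"
    using len zs distinct_last_neq_hd[of zs] unfolding is_route_def by auto
  moreover have "last zs \<in> S" "hd zs \<in> S"
    using zs \<open>zs \<noteq> []\<close> unfolding is_route_def by auto
  ultimately have "route_cost w (insert_after xs i Z)
      \<le> route_cost w zs + insertion_cost w Z (last zs) (hd zs)"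
    using least min[OF zs] route_cost_insert_after[OF i] by fastforce
  also have "\<dots> = route_cost w ys"
    using cost route_cost_Cons[OF \<open>zs \<noteq> []\<close>] by simp
  finally show "route_cost w (insert_after xs i Z) \<le> route_cost w ys" .
qed

lemma insertion_cost_le_if_least_pair:
  assumes sym_Z: "\<forall>x\<in>S. w Z x = w x Z" and sym_PQ: "w Q P = w P Q"
    and least: "\<not> (\<exists>A\<in>S. \<exists>B\<in>S. A \<noteq> B \<and> {A, B} \<noteq> {P, Q} \<and>
                    w A Z + w B Z - w A B \<le> w P Z + w Q Z - w P Q)"
    and PQ: "{C, D} = {P, Q}" "P \<in> S" "Q \<in> S"
    and AB: "A \<in> S" "B \<in> S" "A \<noteq> B"
  shows "insertion_cost w Z C D \<le> insertion_cost w Z A B"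
proof -
  have symmetric_cost: "insertion_cost w Z X Y = w X Z + w Y Z - w X Y" if "Y \<in> S" for X Y
    using sym_Z that unfolding insertion_cost_def by simp
  have PQ_cost: "insertion_cost w Z X Y = w P Z + w Q Z - w P Q" if "{X, Y} = {P, Q}" for X Y
    using that symmetric_cost sym_PQ \<open>P \<in> S\<close> \<open>Q \<in> S\<close> unfolding doubleton_eq_iff by auto
  show ?thesis
  proof (cases "{A, B} = {P, Q}")
    case True
    then show ?thesis using PQ_cost[OF PQ(1)] PQ_cost[OF True] by simp
  next
    case False
    then have "w P Z + w Q Z - w P Q < w A Z + w B Z - w A B"
      using least AB by (meson not_le)
    then show ?thesis using PQ_cost[OF PQ(1)] symmetric_cost[OF AB(2)] by simp
  qed
qed

theorem proposition2:
  fixes V :: "'a set" and Z P Q :: 'a and \<omega> :: "'a \<Rightarrow> 'a \<Rightarrow> real" and \<sigma> :: "'a list"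
  assumes finV: "finite V"
    and Z_notin: "Z \<notin> V"
    and sym: "\<forall>x\<in>insert Z V. \<forall>y\<in>insert Z V. x \<noteq> y \<longrightarrow> \<omega> x y = \<omega> y x"
    and opt: "optimal_route \<omega> V \<sigma>"
    and PQ: "P \<noteq> Q" "neighbours \<sigma> P Q"
    and unique: "\<not> (\<exists>A\<in>V. \<exists>B\<in>V. A \<noteq> B \<and> {A, B} \<noteq> {P, Q} \<and>
                    \<omega> A Z + \<omega> B Z - \<omega> A B \<le> \<omega> P Z + \<omega> Q Z - \<omega> P Q)"
  shows "\<forall>i<length \<sigma>. {\<sigma> ! i, \<sigma> ! (Suc i mod length \<sigma>)} = {P, Q}
            \<longrightarrow> optimal_route \<omega> (insert Z V) (insert_after \<sigma> i Z)"
proof (intro allI impI)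
  fix i assume i: "i < length \<sigma>" and edge: "{\<sigma> ! i, \<sigma> ! (Suc i mod length \<sigma>)} = {P, Q}"
  have "set \<sigma> = V" using opt unfolding optimal_route_def is_route_def by simp
  moreover have "Suc i mod length \<sigma> < length \<sigma>"
    using i by (intro mod_less_divisor) auto
  ultimately have "{\<sigma> ! i, \<sigma> ! (Suc i mod length \<sigma>)} \<subseteq> V"
    using i by auto
  then have PQ_V: "P \<in> V" "Q \<in> V"
    using edge by auto
  have sym_Z: "\<forall>x\<in>V. \<omega> Z x = \<omega> x Z"
    using sym Z_notin by (metis insertCI)
  have sym_PQ: "\<omega> Q P = \<omega> P Q"
    using sym PQ_V PQ(1) by simp
  show "optimal_route \<omega> (insert Z V) (insert_after \<sigma> i Z)"
  proof (rule optimal_route_insert_after[OF opt Z_notin i])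
    show "\<sigma> ! i \<noteq> \<sigma> ! (Suc i mod length \<sigma>)"
      using edge PQ(1) by (auto simp add: doubleton_eq_iff)
    show "\<forall>A\<in>V. \<forall>B\<in>V. A \<noteq> B \<longrightarrow> insertion_cost \<omega> Z (\<sigma> ! i) (\<sigma> ! (Suc i mod length \<sigma>))
        \<le> insertion_cost \<omega> Z A B"
      using insertion_cost_le_if_least_pair[OF sym_Z sym_PQ unique edge PQ_V] by blast
  qed
qed

end
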